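(* Let $p$ be a prime and $m\ge 0$ an integer, and let $C_m=\{a\in\mathbb{Z}_p:\delta^m a=0\}$. Then the composition $C_m\subset\mathbb{Z}_p\to\mathbb{Z}_p/p^m\mathbb{Z}_p$ of the inclusion with the reduction map is a bijection.
   Context: $\mathbb{Z}_p$ is the ring of $p$-adic integers, $\delta:\mathbb{Z}_p\to\mathbb{Z}_p$ is the Fermat quotient operator $\delta a=(a-a^p)/p$, and $\delta^m$ is its $m$-th iterate ($\delta^0$ is the identity). *)

theory Defs
  imports "HOL-Computational_Algebra.Primes"
begin

text \<open>p-adic integers as the inverse limit of the rings Z/p^n Z: an element is a
  compatible sequence of residues x n in {0..<p^n} with x (n+1) mod p^n = x n.\<close>

definition zp :: "int \<Rightarrow> (nat \<Rightarrow> int) set" where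
  "zp p = {x. \<forall>n. 0 \<le> x n \<and> x n < p ^ n \<and> x (Suc n) mod p ^ n = x n}"

definition zp_zero :: "nat \<Rightarrow> int" where
  "zp_zero = (\<lambda>n. 0)"

definition zp_sub :: "int \<Rightarrow> (nat \<Rightarrow> int) \<Rightarrow> (nat \<Rightarrow> int) \<Rightarrow> (nat \<Rightarrow> int)" where
  "zp_sub p x y = (\<lambda>n. (x n - y n) mod p ^ n)"

definition zp_pow :: "int \<Rightarrow> (nat \<Rightarrow> int) \<Rightarrow> nat \<Rightarrow> (nat \<Rightarrow> int)" where
  "zp_pow p x k = (\<lambda>n. (x n) ^ k mod p ^ n)"

text \<open>Exact division by p of an element divisible by p (i.e. with x 1 = 0).\<close>
definition zp_divp :: "int \<Rightarrow> (nat \<Rightarrow> int) \<Rightarrow> (nat \<Rightarrow> int)" where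
  "zp_divp p x = (\<lambda>n. x (Suc n) div p)"

definition zp_delta :: "int \<Rightarrow> (nat \<Rightarrow> int) \<Rightarrow> (nat \<Rightarrow> int)" where
  "zp_delta p a = zp_divp p (zp_sub p a (zp_pow p a (nat p)))"

definition C_set :: "int \<Rightarrow> nat \<Rightarrow> (nat \<Rightarrow> int) set" where
  "C_set p m = {a \<in> zp p. (zp_delta p ^^ m) a = zp_zero}"

text \<open>Reduction Z_p -> Z_p/p^m Z_p, with Z_p/p^m Z_p identified canonically with
  Z/p^m Z = {0..<p^m}: a maps to its m-th component.\<close>
definition zp_red :: "nat \<Rightarrow> (nat \<Rightarrow> int) \<Rightarrow> int" where
  "zp_red m a = a m"

end

theory Submission
  imports Defs "HOL-Number_Theory.Number_Theory"
begin

text \<open>Let \<open>q(x) = (x - x^p)/p\<close> be the Fermat quotient of an integer \<open>x\<close>. The congruence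
  \<open>q(y + p^(j+1) t) \<equiv> q(y) + p^j t (mod p^(j+1))\<close> shows that \<open>x mod p^(n+1)\<close> and the
  pair \<open>(x mod p, q(x) mod p^n)\<close> determine each other; since both range over sets of
  size \<open>p^(n+1)\<close>, this is a bijection \<open>\<int>/p^(n+1) \<rightarrow> \<int>/p \<times> \<int>/p^n\<close>. Passing to the limit,
  \<open>a \<mapsto> (a mod p, \<delta> a)\<close> is a bijection \<open>\<int>\<^sub>p \<rightarrow> \<int>/p \<times> \<int>\<^sub>p\<close> carrying \<open>C\<^sub>m\<^sub>+\<^sub>1\<close> onto
  \<open>\<int>/p \<times> C\<^sub>m\<close>, and reduction modulo \<open>p^(m+1)\<close> on \<open>C\<^sub>m\<^sub>+\<^sub>1\<close> factors through it and reduction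
  modulo \<open>p^m\<close> on \<open>C\<^sub>m\<close>.\<close>

lemma fermat_little_int:
  fixes p x :: int
  assumes "prime p"
  shows "[x ^ nat p = x] (mod p)"
proof -
  define n where "n = nat (x mod p)"
  have p: "prime (nat p)" "p > 0" using assms prime_gt_0_int by auto
  have x_n: "[x = int n] (mod p)" using p(2) by (simp add: n_def cong_def)
  have "[n ^ nat p = n] (mod nat p)"
  proof (cases "nat p dvd n")
    case True
    then have n0: "[n = 0] (mod nat p)" by (simp add: cong_0_iff)
    then have "[n ^ nat p = 0 ^ nat p] (mod nat p)" by (rule cong_pow)
    then have "[n ^ nat p = 0] (mod nat p)" using prime_gt_0_nat[OF p(1)] by (simp add: power_0_left)
    then show ?thesis using n0 by (rule cong_trans[OF _ cong_sym])
  next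
    case False
    then have "[n ^ (nat p - 1) = 1] (mod nat p)" by (rule fermat_theorem[OF p(1)])
    then have "[n ^ (nat p - 1) * n = 1 * n] (mod nat p)" by (rule cong_mult) simp
    moreover have "n ^ (nat p - 1) * n = n ^ nat p"
      using power_minus_mult prime_gt_0_nat[OF p(1)] by blast
    ultimately show ?thesis by simp
  qed
  then have "[int (n ^ nat p) = int n] (mod int (nat p))" by (simp only: cong_int_iff)
  then have "[int n ^ nat p = int n] (mod p)" using p(2) by simp
  moreover have "[x ^ nat p = int n ^ nat p] (mod p)" using x_n by (rule cong_pow)
  ultimately show ?thesis using x_n by (meson cong_sym cong_trans)
qed

definition fermat_quotient :: "int \<Rightarrow> int \<Rightarrow> int" where
  "fermat_quotient p x = (x - x ^ nat p) div p"

lemma mult_fermat_quotient: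
  assumes "prime p"
  shows "p * fermat_quotient p x = x - x ^ nat p"
  using fermat_little_int[OF assms, of x]
  by (simp add: fermat_quotient_def cong_iff_dvd_diff dvd_diff_commute)

lemma mult_dvd_power_diff:
  fixes p u y :: int and n :: nat
  assumes "p dvd u" "p dvd int n"
  shows "p * u dvd (y + u) ^ n - y ^ n"
proof -
  define S where "S = (\<Sum>i<n. y ^ (n - Suc i) * (y + u) ^ i)"
  have "(y + u) ^ n - y ^ n = u * S"
    using power_diff_sumr2[of "y + u" n y] by (simp add: S_def)
  moreover have "[S = (\<Sum>i<n. y ^ (n - Suc i) * y ^ i)] (mod p)"
    unfolding S_def using assms(1)
    by (intro cong_sum cong_mult cong_pow) (auto simp: cong_iff_dvd_diff)
  moreover have "y ^ (n - Suc i) * y ^ i = y ^ (n - 1)" if "i < n" for i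
    using that by (simp flip: power_add)
  ultimately have "[S = int n * y ^ (n - 1)] (mod p)" by simp
  then have "p dvd S" using assms(2) by (simp add: cong_dvd_iff)
  then show ?thesis using \<open>_ = u * S\<close> by (simp add: mult.commute mult_dvd_mono)
qed

lemma fermat_quotient_shift:
  assumes "prime p"
  shows "[fermat_quotient p (y + p ^ Suc j * t) = fermat_quotient p y + p ^ j * t] (mod p ^ Suc j)"
proof -
  define u where "u = p ^ Suc j * t"
  have "p * u dvd (y + u) ^ nat p - y ^ nat p"
    using assms by (intro mult_dvd_power_diff) (simp_all add: u_def)
  then obtain w where w: "(y + u) ^ nat p - y ^ nat p = p * u * w" by blast
  have "p * (fermat_quotient p (y + u) - fermat_quotient p y) = u - ((y + u) ^ nat p - y ^ nat p)"
    by (simp add: mult_fermat_quotient[OF assms] algebra_simps)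
  also have "\<dots> = p * (p ^ j * t - p ^ Suc j * (t * w))"
    by (simp only: w) (simp add: u_def algebra_simps)
  finally have "fermat_quotient p (y + u) = fermat_quotient p y + p ^ j * t - p ^ Suc j * (t * w)"
    using prime_gt_0_int[OF assms] by simp
  then show ?thesis by (simp add: u_def cong_iff_dvd_diff)
qed

lemma cong_fermat_quotient_of_cong:
  assumes "prime p" "[x = y] (mod p ^ Suc k)"
  shows "[fermat_quotient p x = fermat_quotient p y] (mod p ^ k)"
proof -
  obtain t where x: "x = y + p ^ Suc k * t"
    using assms(2) by (auto simp: cong_iff_dvd_diff dvd_def algebra_simps)
  have "[fermat_quotient p x = fermat_quotient p y + p ^ k * t] (mod p ^ k)"
    using fermat_quotient_shift[OF assms(1), of y k t] unfolding x
    by (rule cong_dvd_modulus) simp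
  also have "[fermat_quotient p y + p ^ k * t = fermat_quotient p y] (mod p ^ k)"
    by (simp add: cong_iff_dvd_diff)
  finally show ?thesis .
qed

lemma cong_of_cong_fermat_quotient:
  assumes "prime p" "[x = y] (mod p)"
    and "[fermat_quotient p x = fermat_quotient p y] (mod p ^ k)"
  shows "[x = y] (mod p ^ Suc k)"
  using assms(3)
proof (induction k)
  case 0
  then show ?case using assms(2) by simp
next
  case (Suc k)
  have "[fermat_quotient p x = fermat_quotient p y] (mod p ^ k)"
    using Suc.prems by (rule cong_dvd_modulus) (simp add: le_imp_power_dvd)
  then have "[x = y] (mod p ^ Suc k)" by (rule Suc.IH)
  then obtain t where x: "x = y + p ^ Suc k * t"
    by (auto simp: cong_iff_dvd_diff dvd_def algebra_simps)
  have "[fermat_quotient p y + p ^ k * t = fermat_quotient p x] (mod p ^ Suc k)"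
    unfolding x by (rule cong_sym, rule fermat_quotient_shift[OF assms(1)])
  also have "[fermat_quotient p x = fermat_quotient p y] (mod p ^ Suc k)" by (fact Suc.prems)
  finally have "p ^ Suc k dvd p ^ k * t" by (simp add: cong_iff_dvd_diff)
  then have "p dvd t" using prime_gt_0_int[OF assms(1)] by (simp add: mult.commute)
  then show ?case unfolding x by (simp add: cong_iff_dvd_diff mult_dvd_mono)
qed

definition fq_coords :: "int \<Rightarrow> nat \<Rightarrow> int \<Rightarrow> int \<times> int" where
  "fq_coords p n x = (x mod p, fermat_quotient p x mod p ^ n)"

lemma bij_betw_fq_coords:
  assumes "prime p"
  shows "bij_betw (fq_coords p n) {0..<p ^ Suc n} ({0..<p} \<times> {0..<p ^ n})"
proof -
  have p: "p > 0" using assms by (rule prime_gt_0_int)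
  have inj: "inj_on (fq_coords p n) {0..<p ^ Suc n}"
  proof (rule inj_onI)
    fix x y
    assume range: "x \<in> {0..<p ^ Suc n}" "y \<in> {0..<p ^ Suc n}"
      and "fq_coords p n x = fq_coords p n y"
    then have "[x = y] (mod p)" "[fermat_quotient p x = fermat_quotient p y] (mod p ^ n)"
      by (simp_all add: fq_coords_def cong_def)
    then have "[x = y] (mod p ^ Suc n)" by (rule cong_of_cong_fermat_quotient[OF assms])
    then show "x = y" using range by (intro cong_less_imp_eq_int) auto
  qed
  moreover have "fq_coords p n ` {0..<p ^ Suc n} \<subseteq> {0..<p} \<times> {0..<p ^ n}"
    using p by (auto simp: fq_coords_def)
  moreover have "card (fq_coords p n ` {0..<p ^ Suc n}) = card ({0..<p} \<times> {0..<p ^ n})"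
    using inj p by (simp add: card_image card_cartesian_product nat_mult_distrib)
  ultimately show ?thesis
    unfolding bij_betw_def by (simp add: card_subset_eq)
qed

lemma fq_coords_mod:
  assumes "prime p"
  shows "fq_coords p n (y mod p ^ Suc n) = apsnd (\<lambda>z. z mod p ^ n) (fq_coords p (Suc n) y)"
proof -
  have "[y mod p ^ Suc n = y] (mod p ^ Suc n)" by simp
  then have "[fermat_quotient p (y mod p ^ Suc n) = fermat_quotient p y] (mod p ^ n)"
    by (rule cong_fermat_quotient_of_cong[OF assms])
  then show ?thesis
    by (simp add: fq_coords_def cong_def mod_mod_cancel le_imp_power_dvd)
qed

lemma zp_component:
  assumes "a \<in> zp p"
  shows "a n \<in> {0..<p ^ n}" and "a (Suc n) mod p ^ n = a n"
  using assms by (auto simp: zp_def)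

lemma zp_mod_power:
  assumes "a \<in> zp p" "p > 0" "j \<le> n"
  shows "a n mod p ^ j = a j"
  using assms(3)
proof (induction n rule: dec_induct)
  case base
  then show ?case using zp_component(1)[OF assms(1), of j] by simp
next
  case (step n)
  have "a (Suc n) mod p ^ j = a (Suc n) mod p ^ n mod p ^ j"
    using step(1) by (simp add: mod_mod_cancel le_imp_power_dvd)
  then show ?case using zp_component(2)[OF assms(1)] step(3) by simp
qed

lemma zp_delta_eq:
  assumes "prime p"
  shows "zp_delta p a n = fermat_quotient p (a (Suc n)) mod p ^ n"
proof -
  define x where "x = a (Suc n)"
  have "zp_delta p a n = (x - x ^ nat p mod p ^ Suc n) mod p ^ Suc n div p"
    by (simp add: zp_delta_def zp_divp_def zp_sub_def zp_pow_def x_def)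
  also have "\<dots> = (p * fermat_quotient p x) mod (p * p ^ n) div p"
    by (simp add: mod_diff_right_eq mult_fermat_quotient[OF assms])
  also have "\<dots> = fermat_quotient p x mod p ^ n"
    using assms by (simp add: mult_mod_right[symmetric])
  finally show ?thesis by (simp add: x_def)
qed

lemma fq_coords_zp:
  assumes "prime p" "a \<in> zp p"
  shows "fq_coords p n (a (Suc n)) = (a 1, zp_delta p a n)"
  using zp_mod_power[OF assms(2) prime_gt_0_int[OF assms(1)], of 1 "Suc n"]
  by (simp add: fq_coords_def zp_delta_eq[OF assms(1)])

lemma zp_delta_in_zp:
  assumes "prime p" "a \<in> zp p"
  shows "zp_delta p a \<in> zp p"
  unfolding zp_def
proof (intro CollectI allI conjI)
  fix n
  show "0 \<le> zp_delta p a n" "zp_delta p a n < p ^ n"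
    using prime_gt_0_int[OF assms(1)] by (simp_all add: zp_delta_eq[OF assms(1)])
  have "[a (Suc (Suc n)) mod p ^ Suc n = a (Suc (Suc n))] (mod p ^ Suc n)" by simp
  then have "[a (Suc n) = a (Suc (Suc n))] (mod p ^ Suc n)"
    by (simp only: zp_component(2)[OF assms(2)])
  then have "[fermat_quotient p (a (Suc n)) = fermat_quotient p (a (Suc (Suc n)))] (mod p ^ n)"
    by (rule cong_fermat_quotient_of_cong[OF assms(1)])
  then show "zp_delta p a (Suc n) mod p ^ n = zp_delta p a n"
    by (simp add: zp_delta_eq[OF assms(1)] cong_def mod_mod_cancel le_imp_power_dvd)
qed

lemma zp_lift:
  assumes "prime p" "r \<in> {0..<p}" "c \<in> zp p"
  shows "\<exists>a\<in>zp p. a 1 = r \<and> zp_delta p a = c"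
proof -
  note bij = bij_betw_fq_coords[OF assms(1)]
  define a where "a n = (case n of 0 \<Rightarrow> 0
    | Suc k \<Rightarrow> the_inv_into {0..<p ^ Suc k} (fq_coords p k) (r, c k))" for n
  have target: "(r, c k) \<in> {0..<p} \<times> {0..<p ^ k}" for k
    using assms(2) zp_component(1)[OF assms(3)] by simp
  have a_range: "a (Suc k) \<in> {0..<p ^ Suc k}" for k
    unfolding a_def using bij_betw_apply[OF bij_betw_the_inv_into[OF bij] target] by simp
  have a_coords: "fq_coords p k (a (Suc k)) = (r, c k)" for k
    unfolding a_def using f_the_inv_into_f_bij_betw[OF bij target] by simp
  have "a (Suc (Suc k)) mod p ^ Suc k = a (Suc k)" for k
  proof (rule bij_betw_imp_inj_on[OF bij, THEN inj_onD])
    have "fq_coords p k (a (Suc (Suc k)) mod p ^ Suc k)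
        = apsnd (\<lambda>z. z mod p ^ k) (fq_coords p (Suc k) (a (Suc (Suc k))))"
      by (rule fq_coords_mod[OF assms(1)])
    also have "\<dots> = (r, c (Suc k) mod p ^ k)" by (simp only: a_coords apsnd_conv)
    also have "\<dots> = fq_coords p k (a (Suc k))" by (simp add: a_coords zp_component(2)[OF assms(3)])
    finally show "fq_coords p k (a (Suc (Suc k)) mod p ^ Suc k) = fq_coords p k (a (Suc k))" .
    show "a (Suc (Suc k)) mod p ^ Suc k \<in> {0..<p ^ Suc k}"
      using prime_gt_0_int[OF assms(1)] by simp
  qed (fact a_range)
  then have a_zp: "a \<in> zp p"
    using a_range by (auto simp: zp_def a_def split: nat.split)
  have "(a 1, zp_delta p a n) = (r, c n)" for n
    using fq_coords_zp[OF assms(1) a_zp, of n] a_coords[of n] by simp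
  then show ?thesis using a_zp by auto
qed

lemma bij_betw_zp_residue_delta:
  assumes "prime p"
  shows "bij_betw (\<lambda>a. (a 1, zp_delta p a)) (zp p) ({0..<p} \<times> zp p)"
  unfolding bij_betw_def
proof (intro conjI inj_onI subset_antisym subsetI)
  fix a b
  assume a: "a \<in> zp p" and b: "b \<in> zp p" and eq: "(a 1, zp_delta p a) = (b 1, zp_delta p b)"
  show "a = b"
  proof
    fix n
    show "a n = b n"
    proof (cases n)
      case 0
      then show ?thesis using zp_component(1)[OF a, of 0] zp_component(1)[OF b, of 0] by simp
    next
      case (Suc k)
      have "fq_coords p k (a (Suc k)) = fq_coords p k (b (Suc k))"
        using eq by (simp add: fq_coords_zp[OF assms a] fq_coords_zp[OF assms b])
      then show ?thesis unfolding Suc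
        by (rule inj_onD[OF bij_betw_imp_inj_on[OF bij_betw_fq_coords[OF assms]]])
          (fact zp_component(1)[OF a] zp_component(1)[OF b])+
    qed
  qed
next
  fix x
  assume "x \<in> (\<lambda>a. (a 1, zp_delta p a)) ` zp p"
  then show "x \<in> {0..<p} \<times> zp p"
    using zp_component(1)[of _ p 1] zp_delta_in_zp[OF assms] by auto
next
  fix x
  assume "x \<in> {0..<p} \<times> zp p"
  then show "x \<in> (\<lambda>a. (a 1, zp_delta p a)) ` zp p"
    using zp_lift[OF assms] by (force simp: image_iff)
qed

lemma C_set_Suc_iff:
  assumes "prime p"
  shows "a \<in> C_set p (Suc k) \<longleftrightarrow> a \<in> zp p \<and> zp_delta p a \<in> C_set p k"
proof -
  have "(zp_delta p ^^ Suc k) a = (zp_delta p ^^ k) (zp_delta p a)"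
    by (simp only: funpow_Suc_right o_apply)
  then show ?thesis using zp_delta_in_zp[OF assms] by (auto simp: C_set_def)
qed

lemma C_set_subset_zp: "C_set p k \<subseteq> zp p"
  by (auto simp: C_set_def)

lemma bij_betw_zp_red_Suc:
  assumes "prime p" "bij_betw (zp_red k) (C_set p k) {0..<p ^ k}"
  shows "bij_betw (zp_red (Suc k)) (C_set p (Suc k)) {0..<p ^ Suc k}"
proof -
  let ?\<psi> = "\<lambda>a. (a 1, zp_delta p a)"
  note \<psi> = bij_betw_zp_residue_delta[OF assms(1)]
  have "?\<psi> ` C_set p (Suc k) = {0..<p} \<times> C_set p k"
  proof (intro subset_antisym subsetI)
    fix x
    assume "x \<in> ?\<psi> ` C_set p (Suc k)"
    then show "x \<in> {0..<p} \<times> C_set p k"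
      using zp_component(1)[of _ p 1] by (auto simp: C_set_Suc_iff[OF assms(1)])
  next
    fix x
    assume x: "x \<in> {0..<p} \<times> C_set p k"
    then have "x \<in> ?\<psi> ` zp p"
      using C_set_subset_zp bij_betw_imp_surj_on[OF \<psi>] by blast
    then show "x \<in> ?\<psi> ` C_set p (Suc k)"
      using x by (auto simp: C_set_Suc_iff[OF assms(1)])
  qed
  then have "bij_betw ?\<psi> (C_set p (Suc k)) ({0..<p} \<times> C_set p k)"
    by (intro bij_betw_subset[OF \<psi> C_set_subset_zp])
  then have "bij_betw (map_prod id (zp_red k) \<circ> ?\<psi>) (C_set p (Suc k)) ({0..<p} \<times> {0..<p ^ k})"
    using bij_betw_map_prod[OF bij_betw_id assms(2)] by (rule bij_betw_trans)
  moreover have "(map_prod id (zp_red k) \<circ> ?\<psi>) a = (fq_coords p k \<circ> zp_red (Suc k)) a"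
    if "a \<in> C_set p (Suc k)" for a
    using that by (simp add: C_set_def zp_red_def fq_coords_zp[OF assms(1)])
  ultimately have "bij_betw (fq_coords p k \<circ> zp_red (Suc k)) (C_set p (Suc k)) ({0..<p} \<times> {0..<p ^ k})"
    using bij_betw_cong by blast
  moreover have "zp_red (Suc k) ` C_set p (Suc k) \<subseteq> {0..<p ^ Suc k}"
    unfolding zp_red_def using C_set_subset_zp zp_component(1) by blast
  ultimately show ?thesis
    using bij_betw_comp_iff2[OF bij_betw_fq_coords[OF assms(1)]] by blast
qed

theorem lemma4p1:
  fixes p :: int and m :: nat
  assumes "prime p"
  shows "bij_betw (zp_red m) (C_set p m) {0..<p ^ m}"
proof (induction m)
  case 0
  have "zp_zero \<in> zp p" using prime_gt_0_int[OF assms] by (simp add: zp_def zp_zero_def)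
  then have "C_set p 0 = {zp_zero}" by (auto simp: C_set_def)
  moreover have "{0..<p ^ 0} = {0}" by auto
  ultimately show ?case by (simp add: zp_red_def zp_zero_def)
next
  case (Suc k)
  then show ?case by (rule bij_betw_zp_red_Suc[OF assms])
qed

end
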